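(* Let $\chi$ be a regular cardinal with $\chi>\aleph_0$. (1) If an ordinal $\eta>\chi$ is weakly reflective for $\chi$ and $\zeta>\eta$, then $\zeta$ is weakly reflective for $\chi$. (2) For an ordinal $\eta>\chi$: $\eta$ has the strong non-reflection property for $\chi$ iff there is $h:\eta\to\chi$ such that for every $\delta\in S^\eta_\chi$ there is a club $C$ of $\delta$ with $h\restriction C$ one-to-one; moreover the same function $h$ can witness both sides. (3) If there is some ordinal $\eta>\chi$ which is weakly reflective for $\chi$, then the least such ordinal, denoted $\theta^\ast(\chi)$, is a regular cardinal $>\chi$. Consequently an ordinal $\zeta$ is weakly reflective for $\chi$ iff there is a regular cardinal $\theta\le\zeta$ which is weakly reflective for $\chi$. (4) Suppose $\theta^\ast(\chi)$ is defined, and $\eta=\theta^\ast(\chi)$, or $\eta$ is an ordinal of cofinality $\ge\theta^\ast(\chi)$ such that $S^\eta_{\theta^\ast(\chi)}$ is stationary in $\eta$. Then for every function $h:\eta\to\chi$ the set $\mathrm{ref}(h)$ is stationary in $\eta$.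
   Context: $S^\eta_\chi=\{\delta<\eta:\mathrm{cf}(\delta)=\chi\}$. For a regular cardinal $\chi>\aleph_0$ and ordinal $\eta>\chi$: $\eta$ has the strong non-reflection property for $\chi$ if there is $h:\eta\to\chi$ such that for every $\delta\in S^\eta_\chi$ there is a club $C$ of $\delta$ with $h\restriction C$ strictly increasing; otherwise $\eta$ is weakly reflective for $\chi$. For $h:\eta\to\chi$, $\mathrm{ref}(h)=\{\delta\in S^\eta_\chi: h\restriction C$ is not strictly increasing for any club $C$ of $\delta\}$. *)

theory Defs
  imports Main "HOL-Library.Countable_Set"
begin

text \<open>Ordinals are modelled as elements of an arbitrary well-ordered type 'a; the
element x stands for the ordinal that is the order type of the initial segment {..<x}.
Since the type variable is universally quantified, this covers all ordinals.\<close>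

definition is_limit :: "'a::wellorder \<Rightarrow> bool" where
  "is_limit d \<longleftrightarrow> (\<exists>b. b < d) \<and> (\<forall>b<d. \<exists>g. b < g \<and> g < d)"

definition cof :: "'a::wellorder \<Rightarrow> 'a" where
  "cof d = (LEAST a. \<exists>f. f ` {..<a} \<subseteq> {..<d} \<and> (\<forall>b<d. \<exists>g<a. b \<le> f g))"

definition S_cof :: "'a::wellorder \<Rightarrow> 'a \<Rightarrow> 'a set" where
  "S_cof eta chi = {d. d < eta \<and> cof d = chi}"

definition club_in :: "'a::wellorder set \<Rightarrow> 'a \<Rightarrow> bool" where
  "club_in C d \<longleftrightarrow> C \<subseteq> {..<d} \<and> (\<forall>b<d. \<exists>g\<in>C. b \<le> g) \<and>
     (\<forall>g<d. is_limit g \<and> (\<forall>b<g. \<exists>x\<in>C. b \<le> x \<and> x < g) \<longrightarrow> g \<in> C)"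

definition stationary_in :: "'a::wellorder set \<Rightarrow> 'a \<Rightarrow> bool" where
  "stationary_in S d \<longleftrightarrow> S \<subseteq> {..<d} \<and> (\<forall>C. club_in C d \<longrightarrow> S \<inter> C \<noteq> {})"

definition is_cardinal :: "'a::wellorder \<Rightarrow> bool" where
  "is_cardinal a \<longleftrightarrow> (\<forall>b<a. \<not> (\<exists>f. bij_betw f {..<b} {..<a}))"

definition regular_cardinal :: "'a::wellorder \<Rightarrow> bool" where
  "regular_cardinal a \<longleftrightarrow> is_cardinal a \<and> infinite {..<a} \<and> cof a = a"

definition maps_into :: "('a::wellorder \<Rightarrow> 'a) \<Rightarrow> 'a \<Rightarrow> 'a \<Rightarrow> bool" where
  "maps_into h eta chi \<longleftrightarrow> h ` {..<eta} \<subseteq> {..<chi}"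

definition strong_nonrefl :: "'a::wellorder \<Rightarrow> 'a \<Rightarrow> bool" where
  "strong_nonrefl eta chi \<longleftrightarrow> chi < eta \<and>
     (\<exists>h. maps_into h eta chi \<and>
        (\<forall>d\<in>S_cof eta chi. \<exists>C. club_in C d \<and> strict_mono_on C h))"

definition weakly_reflective :: "'a::wellorder \<Rightarrow> 'a \<Rightarrow> bool" where
  "weakly_reflective eta chi \<longleftrightarrow> chi < eta \<and> \<not> strong_nonrefl eta chi"

definition refl_set :: "('a::wellorder \<Rightarrow> 'a) \<Rightarrow> 'a \<Rightarrow> 'a \<Rightarrow> 'a set" where
  "refl_set h eta chi =
     {d\<in>S_cof eta chi. \<not> (\<exists>C. club_in C d \<and> strict_mono_on C h)}"

definition theta_star :: "'a::wellorder \<Rightarrow> 'a" where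
  "theta_star chi = (LEAST eta. weakly_reflective eta chi)"

end

theory Submission
  imports Defs
begin

text \<open>
  Call \<open>h : \<eta> \<rightarrow> \<chi>\<close> an injective colouring of \<open>\<eta>\<close> if it is one-to-one on a club of every
  \<open>\<delta> \<in> S\<^sup>\<eta>\<^sub>\<chi>\<close>. An injective map \<open>\<chi> \<rightarrow> \<chi>\<close> is strictly increasing on the club of closure
  points of a monotone bound for its preimages; pulling this back along a normal enumeration of
  order type \<open>\<chi>\<close> shows that strong non-reflection amounts to having an injective colouring.

  Injective colourings glue: through a pairing function \<open>\<chi> \<times> \<chi> \<rightarrow> \<chi>\<close> two colourings combine into
  one that is injective wherever either is. So if every ordinal below \<open>\<eta>\<close> has a colouring, so does
  \<open>\<eta>\<close> when it is a successor, and also when some colouring is injective at the accumulation points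
  of a club \<open>E\<close> of \<open>\<eta>\<close>, since at all other points a colouring of a bounded segment suffices. For
  singular \<open>\<eta>\<close> take for \<open>E\<close> the range of a normal enumeration of length \<open>cof \<eta>\<close> and transport a
  colouring of \<open>cof \<eta>\<close> along it. Hence the least weakly reflective \<open>\<theta>\<^sup>*\<close> is a regular cardinal,
  and every \<open>ref(h)\<close> meets every club \<open>E\<close> of \<open>\<theta>\<^sup>*\<close>, as otherwise \<open>h\<close> would be injective at the
  accumulation points of \<open>E\<close>. For the larger \<open>\<eta>\<close>, a point of \<open>S\<^sup>\<eta>\<^sub>\<theta>\<^sub>*\<close> accumulating \<open>E\<close>
  carries a normal enumeration of length \<open>\<theta>\<^sup>*\<close> through \<open>E\<close>, along which \<open>ref\<close> is transferred.
\<close>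

subsection \<open>Cofinality\<close>

lemma cof_leI:
  assumes "f ` {..<a} \<subseteq> {..<d}" and "\<forall>b<d. \<exists>g<a. b \<le> f g"
  shows "cof d \<le> a"
  unfolding cof_def by (rule Least_le) (use assms in blast)

lemma cof_witness:
  obtains f where "f ` {..<cof d} \<subseteq> {..<d}" and "\<forall>b<d. \<exists>g<cof d. b \<le> f g"
proof -
  have "\<exists>f. f ` {..<cof d} \<subseteq> {..<d} \<and> (\<forall>b<d. \<exists>g<cof d. b \<le> f g)"
    unfolding cof_def by (rule LeastI[of _ d]) (rule exI[of _ id], auto)
  then show thesis using that by blast
qed

lemma cof_le_self: "cof d \<le> d"
  by (rule cof_leI[of id]) auto

lemma bounded_below_if_less_cof:
  assumes "i < cof d" and "A \<subseteq> f ` {..<i}" and "A \<subseteq> {..<d}"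
  shows "\<exists>b<d. \<forall>a\<in>A. a < b"
proof (rule ccontr)
  assume unbounded: "\<not> ?thesis"
  have "i < d" using assms(1) cof_le_self[of d] by simp
  define f' where "f' g = (if f g \<in> A then f g else i)" for g
  have "f' ` {..<i} \<subseteq> {..<d}" using assms(3) \<open>i < d\<close> by (auto simp: f'_def)
  moreover have "\<forall>b<d. \<exists>g<i. b \<le> f' g"
  proof (intro allI impI)
    fix b assume "b < d"
    then obtain a where "a \<in> A" "b \<le> a" using unbounded by (meson not_less)
    then obtain g where "g < i" "a = f g" using assms(2) by auto
    then show "\<exists>g<i. b \<le> f' g" using \<open>a \<in> A\<close> \<open>b \<le> a\<close> by (auto simp: f'_def)
  qed
  ultimately have "cof d \<le> i" by (rule cof_leI)
  then show False using assms(1) by simp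
qed

lemma bounded_below_if_inj_less_cof:
  assumes "i < cof d" and "inj_on g A" and "g ` A \<subseteq> {..<i}" and "A \<subseteq> {..<d}"
  shows "\<exists>b<d. \<forall>a\<in>A. a < b"
proof -
  have "A \<subseteq> inv_into A g ` {..<i}"
  proof
    fix a assume "a \<in> A"
    then have "a = inv_into A g (g a)" using assms(2) by simp
    then show "a \<in> inv_into A g ` {..<i}" using assms(3) \<open>a \<in> A\<close> by blast
  qed
  then show ?thesis using bounded_below_if_less_cof[OF assms(1) _ assms(4)] by blast
qed

lemma infinite_cof_imp_is_limit:
  assumes "infinite {..<cof d}"
  shows "is_limit d"
proof -
  obtain g0 where g0: "g0 < cof d"
    using infinite_imp_nonempty[OF assms] by auto
  obtain g1 where g1: "g1 < cof d" "g1 \<noteq> g0"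
    using infinite_imp_nonempty[of "{..<cof d} - {g0}"] assms by auto
  obtain a c where ac: "a < c" "c < cof d"
    using g0 g1 by (metis linorder_neqE)
  show ?thesis
    unfolding is_limit_def
  proof (intro conjI allI impI)
    show "\<exists>b. b < d" using g0 cof_le_self[of d] by (meson less_le_trans)
    fix b assume "b < d"
    show "\<exists>g. b < g \<and> g < d"
    proof (rule ccontr)
      assume "\<not> ?thesis"
      then have "\<forall>b'<d. \<exists>g<c. b' \<le> (\<lambda>_. b) g" using ac(1) by (auto simp: not_less)
      then have "cof d \<le> c" using \<open>b < d\<close> by (intro cof_leI) auto
      then show False using ac(2) by simp
    qed
  qed
qed

lemma is_limitD: "is_limit d \<Longrightarrow> b < d \<Longrightarrow> \<exists>g. b < g \<and> g < d"
  unfolding is_limit_def by blast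

lemma regular_cardinal_is_limit: "regular_cardinal a \<Longrightarrow> is_limit a"
  unfolding regular_cardinal_def by (metis infinite_cof_imp_is_limit)

text \<open>Merging the values of a cofinal map at \<open>z\<close> and at the last point \<open>a\<close> of its domain gives a
  cofinal map on \<open>{..<a}\<close>.\<close>

lemma cof_le_predecessor:
  assumes "z < a" and le_a: "\<forall>g<cof d. g \<le> a"
  shows "cof d \<le> a"
proof (rule ccontr)
  assume "\<not> cof d \<le> a"
  then have "a < cof d" by simp
  obtain f where f: "f ` {..<cof d} \<subseteq> {..<d}" "\<forall>b<d. \<exists>g<cof d. b \<le> f g"
    by (rule cof_witness)
  define f' where "f' x = (if x = z then max (f z) (f a) else f x)" for x
  have "f x < d" if "x < cof d" for x using f(1) that by auto
  then have "f' ` {..<a} \<subseteq> {..<d}"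
    using \<open>a < cof d\<close> \<open>z < a\<close> by (auto simp: f'_def intro: less_trans)
  moreover have "\<exists>g<a. b \<le> f' g" if "b < d" for b
  proof -
    obtain g where g: "g < cof d" "b \<le> f g" using f(2) \<open>b < d\<close> by blast
    show ?thesis
    proof (cases "g = a \<or> g = z")
      case True
      then show ?thesis using g(2) \<open>z < a\<close> by (auto simp: f'_def max.coboundedI1 max.coboundedI2)
    next
      case False
      then have "g < a" using le_a g(1) by (auto simp: le_less)
      then show ?thesis using g(2) False by (auto simp: f'_def)
    qed
  qed
  ultimately have "cof d \<le> a" by (intro cof_leI) auto
  then show False using \<open>a < cof d\<close> by simp
qed

lemma is_limit_cof:
  assumes lim: "is_limit d"
  shows "is_limit (cof d)"
proof -
  obtain f where f: "f ` {..<cof d} \<subseteq> {..<d}" "\<forall>b<d. \<exists>g<cof d. b \<le> f g"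
    by (rule cof_witness)
  show ?thesis
    unfolding is_limit_def
  proof (intro conjI allI impI)
    show "\<exists>b. b < cof d" using f(2) lim unfolding is_limit_def by blast
    fix a assume "a < cof d"
    show "\<exists>g. a < g \<and> g < cof d"
    proof (rule ccontr)
      assume "\<not> ?thesis"
      then have le_a: "\<forall>g<cof d. g \<le> a" by (auto simp: not_less)
      show False
      proof (cases "\<exists>z. z < a")
        case True
        then show False using cof_le_predecessor le_a \<open>a < cof d\<close> by (meson leD)
      next
        case False
        then have "g = a" if "g < cof d" for g
          using le_a that by (auto simp: order.order_iff_strict)
        then have "b \<le> f a" if "b < d" for b using f(2) that by blast
        moreover obtain c where "f a < c" "c < d"
          using is_limitD[OF lim] f(1) \<open>a < cof d\<close> by blast
        ultimately show False by (meson leD)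
      qed
    qed
  qed
qed

lemma cof_eq_self_imp_is_cardinal:
  assumes "cof a = a"
  shows "is_cardinal a"
  unfolding is_cardinal_def
proof (intro allI impI notI)
  fix b assume "b < a" and "\<exists>f. bij_betw f {..<b} {..<a}"
  then obtain f where f: "bij_betw f {..<b} {..<a}" by blast
  have "\<exists>g<b. c \<le> f g" if "c < a" for c
  proof -
    have "c \<in> f ` {..<b}" using f that by (simp add: bij_betw_def)
    then show ?thesis by auto
  qed
  then have "cof a \<le> b" using f by (intro cof_leI) (auto simp: bij_betw_def)
  then show False using assms \<open>b < a\<close> by simp
qed

subsection \<open>Suprema of countable sets\<close>

lemma countable_initial_segment_below:
  fixes x :: "'a::wellorder"
  assumes "infinite {..<x}"
  obtains w where "w \<le> x" and "infinite {..<w}" and "countable {..<w}"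
proof
  define w where "w = (LEAST w. infinite {..<w :: 'a})"
  show "w \<le> x" "infinite {..<w}"
    unfolding w_def using assms by (rule Least_le, rule LeastI)
  have "finite {..<v}" if "v < w" for v
    using not_less_Least[OF that[unfolded w_def]] by blast
  have "inj_on (\<lambda>v. card {..<v}) {..<w}"
  proof (rule linorder_inj_onI)
    fix u v assume "u < v" "u \<in> {..<w}" "v \<in> {..<w}"
    then have "card {..<u} < card {..<v}"
      using \<open>\<And>v. v < w \<Longrightarrow> finite {..<v}\<close>[of v] by (intro psubset_card_mono) auto
    then show "card {..<u} \<noteq> card {..<v}" by simp
  qed (auto simp: linear)
  then show "countable {..<w}" by (rule countableI)
qed

lemma countable_bounded_below_if_uncountable_cof:
  assumes "uncountable {..<cof d}" and "countable A" and "A \<subseteq> {..<d}"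
  shows "\<exists>b<d. \<forall>a\<in>A. a < b"
proof -
  have "infinite {..<cof d}" using assms(1) countable_finite by auto
  then obtain w where w: "w \<le> cof d" "infinite {..<w}" "countable {..<w}"
    by (rule countable_initial_segment_below)
  have "w \<noteq> cof d" using w(3) assms(1) by auto
  with w(1) have "w < cof d" by simp
  have "A \<subseteq> (from_nat_into A \<circ> to_nat_on {..<w}) ` {..<w}"
  proof (cases "A = {}")
    case False
    have "to_nat_on {..<w} ` {..<w} = UNIV"
      using to_nat_on_infinite[OF w(3,2)] by (simp add: bij_betw_def)
    then have "(from_nat_into A \<circ> to_nat_on {..<w}) ` {..<w} = range (from_nat_into A)"
      by (simp only: image_comp[symmetric])
    then show ?thesis using range_from_nat_into[OF False assms(2)] by simp
  qed simp
  then show ?thesis using bounded_below_if_less_cof[OF \<open>w < cof d\<close> _ assms(3)] by blast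
qed

definition strict_sup :: "'a::wellorder set \<Rightarrow> 'a" where
  "strict_sup A = (LEAST y. \<forall>a\<in>A. a < y)"

lemma strict_sup_bound:
  assumes "\<forall>a\<in>A. a < y"
  shows "\<forall>a\<in>A. a < strict_sup A" and "strict_sup A \<le> y"
proof -
  show "\<forall>a\<in>A. a < strict_sup A" unfolding strict_sup_def by (rule LeastI[of _ y]) (rule assms)
  show "strict_sup A \<le> y" unfolding strict_sup_def by (rule Least_le) (rule assms)
qed

lemma less_strict_supD:
  assumes "c < strict_sup A"
  shows "\<exists>a\<in>A. c \<le> a"
proof (rule ccontr)
  assume "\<not> ?thesis"
  then have "\<forall>a\<in>A. a < c" by (simp add: not_le)
  then have "strict_sup A \<le> c" by (rule strict_sup_bound(2))
  then show False using assms by simp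
qed

lemma strict_sup_mono:
  assumes "A \<subseteq> B" and "\<forall>b\<in>B. b < y"
  shows "strict_sup A \<le> strict_sup B"
proof -
  have "\<forall>a\<in>A. a < strict_sup B" using assms(1) strict_sup_bound(1)[OF assms(2)] by blast
  then show ?thesis by (rule strict_sup_bound(2))
qed

lemma iterates_sup:
  assumes "uncountable {..<cof d}" and "b < d" and F: "\<And>y. y < d \<Longrightarrow> y < F y \<and> F y < d"
  obtains s where "s < d" "is_limit s" "\<And>n. (F ^^ n) b < s" "\<And>c. c < s \<Longrightarrow> \<exists>n. c < (F ^^ n) b"
proof -
  define x where "x n = (F ^^ n) b" for n
  have x_less: "x n < d" for n by (induction n) (simp_all add: x_def assms(2) F)
  have x_Suc: "x n < x (Suc n)" for n using F[OF x_less[of n]] by (simp add: x_def)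
  obtain y where y: "y < d" "\<forall>a\<in>range x. a < y"
    using countable_bounded_below_if_uncountable_cof[OF assms(1), of "range x"] x_less by blast
  define s where "s = strict_sup (range x)"
  have above: "x n < s" for n using strict_sup_bound(1)[OF y(2)] by (simp add: s_def)
  have "s < d" using strict_sup_bound(2)[OF y(2)] y(1) by (simp add: s_def)
  have below: "\<exists>n. c < x n" if cs: "c < s" for c
  proof -
    obtain n where "c \<le> x n" using less_strict_supD[of c "range x"] cs unfolding s_def by blast
    then show ?thesis using x_Suc[of n] by (meson le_less_trans)
  qed
  have "is_limit s"
    unfolding is_limit_def using above below by blast
  with \<open>s < d\<close> above below show thesis by (intro that) (simp_all add: x_def)
qed

subsection \<open>Closed unbounded sets\<close>

definition acc_point :: "'a::wellorder set \<Rightarrow> 'a \<Rightarrow> bool" where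
  "acc_point E g \<longleftrightarrow> is_limit g \<and> (\<forall>b<g. \<exists>x\<in>E. b \<le> x \<and> x < g)"

lemma club_inI:
  assumes "C \<subseteq> {..<d}" and "\<And>b. b < d \<Longrightarrow> \<exists>g\<in>C. b \<le> g"
    and "\<And>g. g < d \<Longrightarrow> acc_point C g \<Longrightarrow> g \<in> C"
  shows "club_in C d"
  using assms unfolding club_in_def acc_point_def by blast

lemma club_in_subset: "club_in C d \<Longrightarrow> C \<subseteq> {..<d}"
  unfolding club_in_def by blast

lemma club_in_unbounded: "club_in C d \<Longrightarrow> b < d \<Longrightarrow> \<exists>g\<in>C. b \<le> g"
  unfolding club_in_def by blast

lemma club_in_closed: "club_in C d \<Longrightarrow> g < d \<Longrightarrow> acc_point C g \<Longrightarrow> g \<in> C"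
  unfolding club_in_def acc_point_def by blast

lemma club_in_lessThan: "is_limit d \<Longrightarrow> club_in {..<d} d"
  by (rule club_inI) auto

lemma club_in_Int_atLeast:
  assumes C: "club_in C d" and "b < d"
  shows "club_in (C \<inter> {b..}) d"
proof (rule club_inI)
  show "C \<inter> {b..} \<subseteq> {..<d}" using club_in_subset[OF C] by auto
  show "\<exists>g\<in>C \<inter> {b..}. b' \<le> g" if "b' < d" for b'
    using club_in_unbounded[OF C, of "max b b'"] that assms(2) by auto
  show "g \<in> C \<inter> {b..}" if "g < d" and acc: "acc_point (C \<inter> {b..}) g" for g
  proof -
    have "g \<in> C" using club_in_closed[OF C \<open>g < d\<close>] acc unfolding acc_point_def by blast
    moreover obtain c where "c < g" using acc unfolding acc_point_def is_limit_def by blast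
    then have "b \<le> g" using acc unfolding acc_point_def by force
    ultimately show ?thesis by simp
  qed
qed

lemma club_in_below_acc_point:
  assumes E: "club_in E d" and "g < d" and acc: "acc_point E g"
  shows "club_in (E \<inter> {..<g}) g"
proof (rule club_inI)
  show "\<exists>x\<in>E \<inter> {..<g}. b \<le> x" if "b < g" for b
    using acc that unfolding acc_point_def by blast
  show "x \<in> E \<inter> {..<g}" if "x < g" and acc: "acc_point (E \<inter> {..<g}) x" for x
  proof -
    have "acc_point E x" using acc unfolding acc_point_def by blast
    then show ?thesis using club_in_closed[OF E] \<open>x < g\<close> \<open>g < d\<close> by auto
  qed
qed auto

definition next_in :: "'a::wellorder set \<Rightarrow> 'a \<Rightarrow> 'a" where
  "next_in C y = (LEAST z. z \<in> C \<and> y < z)"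

lemma next_in:
  assumes C: "club_in C d" and "is_limit d" and "y < d"
  shows "next_in C y \<in> C" and "y < next_in C y" and "next_in C y < d"
proof -
  obtain y' where "y < y'" "y' < d" using is_limitD assms(2,3) by blast
  then obtain z where "z \<in> C \<and> y < z" using club_in_unbounded[OF C] by (meson less_le_trans)
  then have "next_in C y \<in> C \<and> y < next_in C y" unfolding next_in_def by (rule LeastI)
  then show "next_in C y \<in> C" "y < next_in C y" "next_in C y < d"
    using club_in_subset[OF C] by auto
qed

lemma next_in_least: "z \<in> C \<Longrightarrow> y < z \<Longrightarrow> next_in C y \<le> z"
  unfolding next_in_def by (rule Least_le) simp

lemma club_in_Int:
  assumes unc: "uncountable {..<cof d}" and C1: "club_in C1 d" and C2: "club_in C2 d"
  shows "club_in (C1 \<inter> C2) d"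
proof (rule club_inI)
  have lim: "is_limit d" using unc countable_finite infinite_cof_imp_is_limit by blast
  show "C1 \<inter> C2 \<subseteq> {..<d}" using club_in_subset[OF C1] by auto
  show "g \<in> C1 \<inter> C2" if "g < d" "acc_point (C1 \<inter> C2) g" for g
    using that club_in_closed[OF C1] club_in_closed[OF C2] unfolding acc_point_def by blast
  fix b assume "b < d"
  define F where "F = next_in C2 \<circ> next_in C1"
  have F: "y < next_in C1 y" "next_in C1 y < F y" "F y < d" "next_in C1 y \<in> C1" "F y \<in> C2"
    if "y < d" for y
    using next_in[OF C1 lim that] next_in[OF C2 lim, of "next_in C1 y"] unfolding F_def by auto
  have "y < F y \<and> F y < d" if "y < d" for y using F[OF that] by (meson less_trans)
  then obtain s where s: "s < d" "is_limit s" "\<And>n. (F ^^ n) b < s"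
    "\<And>c. c < s \<Longrightarrow> \<exists>n. c < (F ^^ n) b"
    using iterates_sup[OF unc \<open>b < d\<close>, of F] by blast
  have "acc_point C1 s \<and> acc_point C2 s"
    unfolding acc_point_def
  proof (intro conjI allI impI)
    fix c assume "c < s"
    then obtain n where n: "c < (F ^^ n) b" using s(4) by blast
    have y: "(F ^^ n) b < d" using s(1,3) less_trans by blast
    have "(F ^^ Suc n) b = F ((F ^^ n) b)" by simp
    then have "next_in C1 ((F ^^ n) b) < s" "F ((F ^^ n) b) < s"
      using F(2)[OF y] s(3)[of "Suc n"] by (metis less_trans)+
    then show "\<exists>x\<in>C1. c \<le> x \<and> x < s" "\<exists>x\<in>C2. c \<le> x \<and> x < s"
      using F[OF y] n by (meson less_imp_le less_trans)+
  qed (use s in auto)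
  then have "s \<in> C1 \<inter> C2" using club_in_closed[OF C1] club_in_closed[OF C2] s(1) by blast
  moreover have "b \<le> s" using s(3)[of 0] by simp
  ultimately show "\<exists>g\<in>C1 \<inter> C2. b \<le> g" by blast
qed

lemma club_in_acc_points:
  assumes unc: "uncountable {..<cof d}" and E: "club_in E d"
  shows "club_in {g. g < d \<and> acc_point E g} d"
proof (rule club_inI)
  have lim: "is_limit d" using unc countable_finite infinite_cof_imp_is_limit by blast
  show "g \<in> {g. g < d \<and> acc_point E g}"
    if "g < d" and acc: "acc_point {g. g < d \<and> acc_point E g} g" for g
  proof -
    have "\<exists>y\<in>E. b \<le> y \<and> y < g" if "b < g" for b
    proof -
      obtain x where x: "x < d" "acc_point E x" "b \<le> x" "x < g"
        using acc \<open>b < g\<close> unfolding acc_point_def by blast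
      then have "x \<in> E" using club_in_closed[OF E] by blast
      then show ?thesis using x by blast
    qed
    then show ?thesis using acc \<open>g < d\<close> unfolding acc_point_def by blast
  qed
  fix b assume "b < d"
  obtain s where s: "s < d" "is_limit s" "\<And>n. (next_in E ^^ n) b < s"
    "\<And>c. c < s \<Longrightarrow> \<exists>n. c < (next_in E ^^ n) b"
    using iterates_sup[OF unc \<open>b < d\<close>, of "next_in E"] next_in[OF E lim] by blast
  have "acc_point E s"
    unfolding acc_point_def
  proof (intro conjI allI impI)
    fix c assume "c < s"
    then obtain n where n: "c < (next_in E ^^ n) b" using s(4) by blast
    have "(next_in E ^^ n) b < d" using s(1,3) by (meson less_trans)
    then have "c < (next_in E ^^ Suc n) b" "(next_in E ^^ Suc n) b \<in> E"
      using next_in[OF E lim] n by (auto intro: less_trans)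
    then show "\<exists>x\<in>E. c \<le> x \<and> x < s" using s(3)[of "Suc n"] by (meson less_imp_le)
  qed (rule s(2))
  moreover have "b \<le> s" using s(3)[of 0] by simp
  ultimately show "\<exists>g\<in>{g. g < d \<and> acc_point E g}. b \<le> g" using s(1) by blast
qed auto

subsection \<open>Normal enumerations\<close>

definition normal_on :: "('a::wellorder \<Rightarrow> 'a) \<Rightarrow> 'a \<Rightarrow> 'a \<Rightarrow> bool" where
  "normal_on e k d \<longleftrightarrow> strict_mono_on {..<k} e \<and> (\<forall>j<k. e j < d) \<and> (\<forall>b<d. \<exists>j<k. b \<le> e j)
     \<and> (\<forall>j<k. is_limit j \<longrightarrow> (\<forall>x. (\<forall>i<j. e i < x) \<longrightarrow> e j \<le> x))"

lemma normal_onD: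
  assumes "normal_on e k d"
  shows "strict_mono_on {..<k} e" and "\<And>j. j < k \<Longrightarrow> e j < d" and "\<And>b. b < d \<Longrightarrow> \<exists>j<k. b \<le> e j"
    and "\<And>j x. j < k \<Longrightarrow> is_limit j \<Longrightarrow> \<forall>i<j. e i < x \<Longrightarrow> e j \<le> x"
  using assms unfolding normal_on_def by blast+

lemma normal_on_less_iff:
  assumes "normal_on e k d" and "i < k" and "j < k"
  shows "e i < e j \<longleftrightarrow> i < j" and "e i \<le> e j \<longleftrightarrow> i \<le> j"
  using strict_mono_on_less[OF normal_onD(1)[OF assms(1)]]
    strict_mono_on_less_eq[OF normal_onD(1)[OF assms(1)]] assms(2,3) by auto

lemma normal_on_below_limit:
  assumes "normal_on e k d" and "J < k" and "is_limit J" and "b < e J"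
  shows "\<exists>j<J. b \<le> e j"
proof (rule ccontr)
  assume "\<not> ?thesis"
  then have "\<forall>i<J. e i < b" by (auto simp: not_le)
  then have "e J \<le> b" using normal_onD(4)[OF assms(1-3)] by blast
  then show False using assms(4) by simp
qed

text \<open>Staying above the values of the cofinal map \<open>f\<close> makes the enumeration of length \<open>cof d\<close>
  cofinal in \<open>d\<close>, even when \<open>E\<close> has larger order type.\<close>

definition enum :: "'a::wellorder set \<Rightarrow> ('a \<Rightarrow> 'a) \<Rightarrow> 'a \<Rightarrow> 'a" where
  "enum E f = wfrec {(x, y). x < y} (\<lambda>r i. LEAST x. x \<in> E \<and> (\<forall>j<i. r j < x \<and> f j \<le> x))"

lemma enum_eq: "enum E f i = (LEAST x. x \<in> E \<and> (\<forall>j<i. enum E f j < x \<and> f j \<le> x))"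
  by (subst enum_def, subst wfrec[OF wf], simp add: enum_def[symmetric] cut_apply)

lemma enum_in_club:
  assumes "cof d = k" and E: "club_in E d" and f: "f ` {..<k} \<subseteq> {..<d}" and "i < k"
  shows "enum E f i \<in> E \<and> (\<forall>j<i. enum E f j < enum E f i \<and> f j \<le> enum E f i)"
  using \<open>i < k\<close>
proof (induction i rule: less_induct)
  case (less i)
  have "enum E f j < d" if "j < i" for j
  proof -
    have "j < k" using that less.prems by simp
    then show ?thesis using less.IH[OF that] club_in_subset[OF E] by auto
  qed
  then obtain b1 where b1: "b1 < d" "\<forall>a\<in>enum E f ` {..<i}. a < b1"
    using bounded_below_if_less_cof[of i d "enum E f ` {..<i}" "enum E f"] less.prems assms(1)
    by auto
  have "f ` {..<i} \<subseteq> {..<d}" using f less.prems by (auto intro: less_trans)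
  then obtain b2 where b2: "b2 < d" "\<forall>a\<in>f ` {..<i}. a < b2"
    using bounded_below_if_less_cof[of i d "f ` {..<i}" f] less.prems assms(1) by blast
  obtain x where x: "x \<in> E" "max b1 b2 \<le> x"
    using club_in_unbounded[OF E, of "max b1 b2"] b1 b2 by auto
  have "x \<in> E \<and> (\<forall>j<i. enum E f j < x \<and> f j \<le> x)"
    using x b1 b2 by (auto intro: less_le_trans less_imp_le)
  then show ?case by (subst (1 2 3) enum_eq) (rule LeastI[of _ x], simp)
qed

lemma enum_continuous:
  assumes "cof d = k" and E: "club_in E d" and f: "f ` {..<k} \<subseteq> {..<d}"
    and "j < k" and "is_limit j" and "\<forall>i<j. enum E f i < x"
  shows "enum E f j \<le> x"
proof -
  let ?e = "enum E f"
  note e = enum_in_club[OF assms(1-3)]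
  define s where "s = strict_sup (?e ` {..<j})"
  have s_above: "?e i < s" if "i < j" for i
    using strict_sup_bound(1)[of "?e ` {..<j}" x] assms(6) that by (simp add: s_def)
  have "s \<le> x" using strict_sup_bound(2)[of "?e ` {..<j}" x] assms(6) by (simp add: s_def)
  have "s \<le> ?e j" using strict_sup_bound(2)[of "?e ` {..<j}"] e[OF \<open>j < k\<close>] by (simp add: s_def)
  have s_below: "\<exists>i<j. c \<le> ?e i" if "c < s" for c
    using less_strict_supD[of c "?e ` {..<j}"] that by (auto simp: s_def)
  have "acc_point E s"
    unfolding acc_point_def is_limit_def
  proof (intro conjI allI impI)
    show "\<exists>b. b < s" using \<open>is_limit j\<close> s_above unfolding is_limit_def by blast
  next
    fix c assume "c < s"
    then obtain i where "i < j" "c \<le> ?e i" using s_below by blast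
    moreover obtain i' where "i < i'" "i' < j" using is_limitD[OF \<open>is_limit j\<close> \<open>i < j\<close>] by blast
    ultimately show "\<exists>g>c. g < s" and "\<exists>x\<in>E. c \<le> x \<and> x < s"
      using e[of i] e[of i'] s_above \<open>j < k\<close> by (meson le_less_trans less_trans)+
  qed
  moreover have "s < d" using \<open>s \<le> ?e j\<close> e[OF \<open>j < k\<close>] club_in_subset[OF E] by auto
  ultimately have "s \<in> E" using club_in_closed[OF E] by blast
  moreover have "f i \<le> s" if ij: "i < j" for i
  proof -
    obtain i' where "i < i'" "i' < j" using is_limitD[OF \<open>is_limit j\<close> ij] by blast
    then show ?thesis
      using e[of i'] s_above[of i'] \<open>j < k\<close> by (meson less_imp_le less_trans order_trans)
  qed
  ultimately have "?e j \<le> s" using s_above by (subst enum_eq) (rule Least_le, simp)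
  then show ?thesis using \<open>s \<le> x\<close> by simp
qed

lemma normal_on_club_exists:
  assumes "cof d = k" and "is_limit k" and E: "club_in E d"
  obtains e where "normal_on e k d" and "\<And>j. j < k \<Longrightarrow> e j \<in> E"
proof -
  obtain f where f: "f ` {..<k} \<subseteq> {..<d}" "\<forall>b<d. \<exists>g<k. b \<le> f g"
    using cof_witness[of d] assms(1) by blast
  let ?e = "enum E f"
  note e = enum_in_club[OF assms(1) E f(1)]
  have "?e j \<in> E" if "j < k" for j using e[OF that] by blast
  moreover have "\<exists>j<k. b \<le> ?e j" if bd: "b < d" for b
  proof -
    obtain g where g: "g < k" "b \<le> f g" using f(2) bd by blast
    obtain j where "g < j" "j < k" using is_limitD[OF assms(2) g(1)] by blast
    then show ?thesis using e g by (meson order_trans)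
  qed
  moreover have "strict_mono_on {..<k} ?e"
    unfolding strict_mono_on_def using e by auto
  moreover have "?e j < d" if "j < k" for j
    using e[OF that] club_in_subset[OF E] by auto
  ultimately have "normal_on ?e k d"
    unfolding normal_on_def using enum_continuous[OF assms(1) E f(1)] by blast
  then show thesis using that e by blast
qed

lemma normal_on_acc_point:
  assumes N: "normal_on e k d" and D: "D \<subseteq> {..<k}" and "g < d" and acc: "acc_point (e ` D) g"
  obtains J where "J < k" and "e J = g" and "acc_point D J"
proof -
  have "\<exists>i<k. g \<le> e i" using normal_onD(3)[OF N \<open>g < d\<close>] by blast
  \<comment> \<open>by continuity, the least such index is mapped onto \<open>g\<close>\<close>
  define J where "J = (LEAST i. i < k \<and> g \<le> e i)"
  have J: "J < k" "g \<le> e J" using LeastI_ex[OF \<open>\<exists>i<k. g \<le> e i\<close>] unfolding J_def by auto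
  have below: "e j < g" if "j < J" for j
    using not_less_Least[of j "\<lambda>i. i < k \<and> g \<le> e i"] that J(1) unfolding J_def[symmetric]
    by (auto simp: not_le)
  have key: "\<exists>j'\<in>D. c < e j' \<and> j' < J" if "c < g" for c
  proof -
    obtain c' where "c < c'" "c' < g"
      using is_limitD[OF _ \<open>c < g\<close>] acc unfolding acc_point_def by blast
    then obtain j' where j': "j' \<in> D" "c' \<le> e j'" "e j' < g"
      using acc unfolding acc_point_def by blast
    have "j' < J"
    proof (rule ccontr)
      assume "\<not> j' < J"
      then have "e J \<le> e j'" using normal_on_less_iff(2)[OF N J(1), of j'] j'(1) D by auto
      then show False using J(2) j'(3) by simp
    qed
    then show ?thesis using j' \<open>c < c'\<close> by (meson less_le_trans)
  qed
  have between: "\<exists>j'\<in>D. j < j' \<and> j' < J" if jJ: "j < J" for j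
  proof -
    obtain j' where j': "j' \<in> D" "e j < e j'" "j' < J" using key below[OF jJ] by blast
    then show ?thesis using normal_on_less_iff(1)[OF N, of j j'] jJ J(1) by auto
  qed
  have "\<exists>j. j < J"
    using key acc unfolding acc_point_def is_limit_def by blast
  then have "acc_point D J"
    unfolding acc_point_def is_limit_def using between by (meson less_imp_le)
  moreover have "e J \<le> g"
    using normal_onD(4)[OF N J(1)] below \<open>acc_point D J\<close> unfolding acc_point_def by blast
  ultimately show thesis using that J by simp
qed

lemma normal_on_acc_point_image:
  assumes N: "normal_on e k d" and D: "D \<subseteq> {..<k}" and "g < k" and acc: "acc_point D g"
  shows "acc_point (e ` D) (e g)"
proof -
  have lim: "is_limit g" using acc unfolding acc_point_def by blast
  have step: "\<exists>j'\<in>D. b < e j' \<and> e j' < e g" if "b < e g" for b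
  proof -
    obtain j where j: "j < g" "b \<le> e j"
      using normal_on_below_limit[OF N \<open>g < k\<close> lim \<open>b < e g\<close>] by blast
    obtain j'' where "j < j''" "j'' < g" using is_limitD[OF lim j(1)] by blast
    then obtain j' where j': "j' \<in> D" "j < j'" "j' < g"
      using acc unfolding acc_point_def by (meson less_le_trans)
    then have "e j < e j'" "e j' < e g"
      using normal_on_less_iff(1)[OF N] D \<open>g < k\<close> by (meson less_trans lessThan_iff subsetD)+
    then show ?thesis using j(2) j'(1) by (meson le_less_trans)
  qed
  obtain j where "j < g" using lim unfolding is_limit_def by blast
  then have "e j < e g" using normal_on_less_iff(1)[OF N] \<open>g < k\<close> by (meson less_trans)
  show ?thesis
    unfolding acc_point_def is_limit_def
  proof (intro conjI allI impI)
    show "\<exists>b. b < e g" using \<open>e j < e g\<close> by blast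
  next
    fix b assume "b < e g"
    then show "\<exists>g'>b. g' < e g" using step by blast
  next
    fix b assume "b < e g"
    then show "\<exists>x\<in>e ` D. b \<le> x \<and> x < e g" using step by (meson image_eqI less_imp_le)
  qed
qed

lemma normal_on_image_club:
  assumes N: "normal_on e k d" and D: "club_in D k"
  shows "club_in (e ` D) d"
proof (rule club_inI)
  have Dk: "D \<subseteq> {..<k}" using club_in_subset[OF D] .
  show "e ` D \<subseteq> {..<d}" using Dk normal_onD(2)[OF N] by auto
  show "\<exists>g\<in>e ` D. b \<le> g" if "b < d" for b
  proof -
    obtain j where j: "j < k" "b \<le> e j" using normal_onD(3)[OF N \<open>b < d\<close>] by blast
    obtain j' where j': "j' \<in> D" "j \<le> j'" using club_in_unbounded[OF D j(1)] by blast
    have "e j \<le> e j'" using normal_on_less_iff(2)[OF N j(1)] j' Dk by auto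
    then show ?thesis using j j' by (meson image_eqI order_trans)
  qed
  show "g \<in> e ` D" if "g < d" and "acc_point (e ` D) g" for g
  proof -
    obtain J where "J < k" "e J = g" "acc_point D J"
      using normal_on_acc_point[OF N Dk \<open>g < d\<close> \<open>acc_point (e ` D) g\<close>] .
    then show ?thesis using club_in_closed[OF D] by blast
  qed
qed

lemma normal_on_restrict:
  assumes N: "normal_on e k d" and "J < k" and "is_limit J"
  shows "normal_on e J (e J)"
  unfolding normal_on_def
proof (intro conjI allI impI)
  show "strict_mono_on {..<J} e"
    using normal_onD(1)[OF N] \<open>J < k\<close>
      unfolding strict_mono_on_def by (meson lessThan_iff less_trans)
  show "e j < e J" if "j < J" for j using normal_on_less_iff(1)[OF N] that \<open>J < k\<close> by auto
  show "\<exists>j<J. b \<le> e j" if "b < e J" for b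
    using normal_on_below_limit[OF N \<open>J < k\<close> \<open>is_limit J\<close> that] .
  show "e j \<le> x" if "j < J" "is_limit j" "\<forall>i<j. e i < x" for j x
    using normal_onD(4)[OF N] that \<open>J < k\<close> by (meson less_trans)
qed

lemma cof_le_of_normal_on:
  assumes N: "normal_on e k d"
  shows "cof d \<le> cof k"
proof -
  obtain f where f: "f ` {..<cof k} \<subseteq> {..<k}" "\<forall>b<k. \<exists>g<cof k. b \<le> f g"
    by (rule cof_witness)
  show ?thesis
  proof (rule cof_leI[of "e \<circ> f"])
    show "(e \<circ> f) ` {..<cof k} \<subseteq> {..<d}" using f(1) normal_onD(2)[OF N] by auto
    show "\<forall>b<d. \<exists>g<cof k. b \<le> (e \<circ> f) g"
    proof (intro allI impI)
      fix b assume "b < d"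
      then obtain j where j: "j < k" "b \<le> e j" using normal_onD(3)[OF N] by blast
      then obtain g where g: "g < cof k" "j \<le> f g" using f(2) by blast
      then have "e j \<le> e (f g)" using normal_on_less_iff(2)[OF N j(1)] f(1) by auto
      then show "\<exists>g<cof k. b \<le> (e \<circ> f) g" using g j by auto
    qed
  qed
qed

lemma cof_ge_of_normal_on:
  assumes N: "normal_on e k d"
  shows "cof k \<le> cof d"
proof -
  obtain f where f: "f ` {..<cof d} \<subseteq> {..<d}" "\<forall>b<d. \<exists>g<cof d. b \<le> f g"
    by (rule cof_witness)
  define F where "F x = (LEAST i. i < k \<and> f x \<le> e i)" for x
  have F: "F x < k" "f x \<le> e (F x)" if x: "x < cof d" for x
  proof -
    obtain j where "j < k" "f x \<le> e j" using normal_onD(3)[OF N] f(1) x by blast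
    then show "F x < k" "f x \<le> e (F x)"
      using LeastI[of "\<lambda>i. i < k \<and> f x \<le> e i" j] unfolding F_def by auto
  qed
  show ?thesis
  proof (rule cof_leI[of F])
    show "F ` {..<cof d} \<subseteq> {..<k}" using F by auto
    show "\<forall>b<k. \<exists>g<cof d. b \<le> F g"
    proof (intro allI impI)
      fix b assume "b < k"
      then obtain g where g: "g < cof d" "e b \<le> f g" using f(2) normal_onD(2)[OF N] by blast
      then have "e b \<le> e (F g)" using F[OF g(1)] by (meson order_trans)
      then have "b \<le> F g" using normal_on_less_iff(2)[OF N \<open>b < k\<close> F(1)[OF g(1)]] by blast
      then show "\<exists>g<cof d. b \<le> F g" using g(1) by blast
    qed
  qed
qed

lemma cof_normal_on:
  assumes "normal_on e k d" and "J < k" and "is_limit J"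
  shows "cof (e J) = cof J"
  using normal_on_restrict[OF assms] by (intro antisym cof_le_of_normal_on cof_ge_of_normal_on)

lemma normal_on_preimage_club:
  assumes unc: "uncountable {..<cof d}" and N: "normal_on e k d" and "is_limit k"
    and C: "club_in C d"
  shows "club_in {j. j < k \<and> e j \<in> C} k"
proof (rule club_inI)
  have "club_in (C \<inter> e ` {..<k}) d"
    using club_in_Int[OF unc C normal_on_image_club[OF N club_in_lessThan[OF \<open>is_limit k\<close>]]] .
  then show "\<exists>j\<in>{j. j < k \<and> e j \<in> C}. b \<le> j" if bk: "b < k" for b
  proof -
    obtain x where "x \<in> C \<inter> e ` {..<k}" "e b \<le> x"
      using club_in_unbounded[OF \<open>club_in (C \<inter> e ` {..<k}) d\<close> normal_onD(2)[OF N bk]] by blast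
    then obtain j where "j < k" "e j \<in> C" "e b \<le> e j" by blast
    then show ?thesis using normal_on_less_iff(2)[OF N bk] by blast
  qed
  show "g \<in> {j. j < k \<and> e j \<in> C}" if "g < k" and "acc_point {j. j < k \<and> e j \<in> C} g" for g
  proof -
    have "acc_point (e ` {j. j < k \<and> e j \<in> C}) (e g)"
      using normal_on_acc_point_image[OF N _ that] by auto
    then have "acc_point C (e g)" unfolding acc_point_def by blast
    then show ?thesis using club_in_closed[OF C] normal_onD(2)[OF N] that(1) by blast
  qed
qed auto

lemma club_in_inj_into_cof:
  assumes "is_limit d" and "is_limit (cof d)"
  obtains C h where "club_in C d" and "inj_on h C" and "h ` C \<subseteq> {..<cof d}"
proof -
  obtain e where N: "normal_on e (cof d) d"
    using normal_on_club_exists[OF refl assms(2) club_in_lessThan[OF assms(1)]] by blast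
  let ?C = "e ` {..<cof d}"
  have "club_in ?C d" using normal_on_image_club[OF N club_in_lessThan[OF assms(2)]] .
  moreover have "inj_on (inv_into {..<cof d} e) ?C" by (rule inj_on_inv_into) simp
  moreover have "inv_into {..<cof d} e ` ?C \<subseteq> {..<cof d}"
    using inv_into_into[of _ e "{..<cof d}"] by blast
  ultimately show thesis by (rule that)
qed

subsection \<open>Injective colourings are increasing on a club\<close>

lemma club_in_closure_points:
  assumes unc: "uncountable {..<cof d}" and F_less: "\<And>y. y < d \<Longrightarrow> F y < d"
    and F_mono: "\<And>y z. y \<le> z \<Longrightarrow> z < d \<Longrightarrow> F y \<le> F z"
  shows "club_in {i. i < d \<and> (\<forall>y<i. F y \<le> i)} d"
proof (rule club_inI)
  have lim: "is_limit d" using unc countable_finite infinite_cof_imp_is_limit by blast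
  show "g \<in> {i. i < d \<and> (\<forall>y<i. F y \<le> i)}"
    if "g < d" and acc: "acc_point {i. i < d \<and> (\<forall>y<i. F y \<le> i)} g" for g
  proof -
    have "F y \<le> g" if "y < g" for y
    proof -
      obtain y' where "y < y'" "y' < g"
        using is_limitD[OF _ \<open>y < g\<close>] acc unfolding acc_point_def by blast
      then obtain x where "\<forall>y<x. F y \<le> x" "y' \<le> x" "x < g"
        using acc unfolding acc_point_def by blast
      then have "F y \<le> x" using \<open>y < y'\<close> by simp
      then show ?thesis using \<open>x < g\<close> by simp
    qed
    then show ?thesis using \<open>g < d\<close> by blast
  qed
  fix b assume "b < d"
  define step where "step y = (SOME z. z < d \<and> y < z \<and> F y \<le> z)" for y
  have step: "step y < d \<and> y < step y \<and> F y \<le> step y" if "y < d" for y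
  proof -
    have "max y (F y) < d" using F_less \<open>y < d\<close> by simp
    then obtain z where "max y (F y) < z" "z < d" using is_limitD[OF lim] by blast
    then have "z < d \<and> y < z \<and> F y \<le> z" by (simp add: less_imp_le)
    then show ?thesis unfolding step_def by (rule someI)
  qed
  have "y < step y \<and> step y < d" if "y < d" for y using step[OF that] by simp
  then obtain s where s: "s < d" "is_limit s" "\<And>n. (step ^^ n) b < s"
    "\<And>c. c < s \<Longrightarrow> \<exists>n. c < (step ^^ n) b"
    using iterates_sup[OF unc \<open>b < d\<close>, of step] by blast
  have "F y \<le> s" if "y < s" for y
  proof -
    obtain n where n: "y < (step ^^ n) b" using s(4)[OF \<open>y < s\<close>] by blast
    have "(step ^^ n) b < d" using s(1,3) less_trans by blast
    then have "F y \<le> F ((step ^^ n) b)" "F ((step ^^ n) b) \<le> (step ^^ Suc n) b"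
      using F_mono[OF less_imp_le[OF n]] step by simp_all
    then show ?thesis using s(3)[of "Suc n"] by (meson order_trans less_imp_le)
  qed
  moreover have "b \<le> s" using s(3)[of 0] by simp
  ultimately show "\<exists>i\<in>{i. i < d \<and> (\<forall>y<i. F y \<le> i)}. b \<le> i" using s(1) by blast
qed auto

text \<open>Bounding the preimage of everything below \<open>g ` {..y}\<close>, rather than below \<open>g y\<close> alone,
  makes the bound monotone in \<open>y\<close>.\<close>

lemma inj_preimage_bound:
  fixes chi :: "'a::wellorder"
  assumes reg: "regular_cardinal chi"
    and inj: "inj_on g {..<chi}" and g: "g ` {..<chi} \<subseteq> {..<chi}"
  obtains F where "\<And>y. y < chi \<Longrightarrow> F y < chi" and "\<And>y z. y \<le> z \<Longrightarrow> z < chi \<Longrightarrow> F y \<le> F z"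
    and "\<And>y j. y < chi \<Longrightarrow> j < chi \<Longrightarrow> g j \<le> g y \<Longrightarrow> j < F y"
proof -
  have cof: "cof chi = chi" using reg unfolding regular_cardinal_def by blast
  have lim: "is_limit chi" using regular_cardinal_is_limit[OF reg] .
  define m where "m y = strict_sup (g ` {..y})" for y
  have m: "m y < chi" "\<forall>j\<le>y. g j < m y" "\<And>z. z \<le> y \<Longrightarrow> m z \<le> m y" if "y < chi" for y
  proof -
    obtain y' where "y < y'" "y' < chi" using is_limitD[OF lim \<open>y < chi\<close>] by blast
    then have "g ` {..y} \<subseteq> g ` {..<y'}" by auto
    moreover have "{..y} \<subseteq> {..<chi}" using \<open>y < chi\<close> by auto
    then have "g ` {..y} \<subseteq> {..<chi}" using g by blast
    ultimately have "\<exists>b<chi. \<forall>a\<in>g ` {..y}. a < b"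
      using \<open>y' < chi\<close> cof by (intro bounded_below_if_less_cof[of y']) simp_all
    then obtain b where "b < chi" and b: "\<forall>a\<in>g ` {..y}. a < b" by blast
    show "m y < chi" using strict_sup_bound(2)[OF b] \<open>b < chi\<close> unfolding m_def by simp
    show "\<forall>j\<le>y. g j < m y" using strict_sup_bound(1)[OF b] unfolding m_def by simp
    show "m z \<le> m y" if "z \<le> y" for z
      unfolding m_def by (rule strict_sup_mono[OF _ b]) (use that in auto)
  qed
  define P where "P y = {j. j < chi \<and> g j < m y}" for y
  define F where "F y = strict_sup (P y)" for y
  have F: "F y < chi" "\<forall>j\<in>P y. j < F y" if y: "y < chi" for y
  proof -
    have "inj_on g (P y)" using inj by (rule inj_on_subset) (auto simp: P_def)
    moreover have "g ` P y \<subseteq> {..<m y}" "P y \<subseteq> {..<chi}" by (auto simp: P_def)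
    moreover have "m y < cof chi" using m(1)[OF y] cof by simp
    ultimately have "\<exists>b<chi. \<forall>j\<in>P y. j < b" by (intro bounded_below_if_inj_less_cof)
    then obtain b where "b < chi" and b: "\<forall>j\<in>P y. j < b" by blast
    show "F y < chi" using strict_sup_bound(2)[OF b] \<open>b < chi\<close> unfolding F_def by simp
    show "\<forall>j\<in>P y. j < F y" using strict_sup_bound(1)[OF b] unfolding F_def .
  qed
  have "F y \<le> F z" if "y \<le> z" "z < chi" for y z
  proof -
    have "P y \<subseteq> P z" using m(3)[OF \<open>z < chi\<close> \<open>y \<le> z\<close>] by (auto simp: P_def)
    then show ?thesis unfolding F_def using F(2)[OF \<open>z < chi\<close>] by (rule strict_sup_mono)
  qed
  moreover have "j < F y" if "y < chi" "j < chi" "g j \<le> g y" for y j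
    using F(2)[OF \<open>y < chi\<close>] m(2)[OF \<open>y < chi\<close>] that unfolding P_def by force
  ultimately show thesis using that F(1) by blast
qed

lemma strict_mono_on_club_if_inj:
  fixes chi :: "'a::wellorder"
  assumes reg: "regular_cardinal chi" and unc: "uncountable {..<chi}"
    and inj: "inj_on g {..<chi}" and g: "g ` {..<chi} \<subseteq> {..<chi}"
  obtains D where "club_in D chi" and "strict_mono_on D g"
proof -
  obtain F where F_less: "\<And>y. y < chi \<Longrightarrow> F y < chi"
    and F_mono: "\<And>y z. y \<le> z \<Longrightarrow> z < chi \<Longrightarrow> F y \<le> F z"
    and F_bound: "\<And>y j. y < chi \<Longrightarrow> j < chi \<Longrightarrow> g j \<le> g y \<Longrightarrow> j < F y"
    using inj_preimage_bound[OF reg inj g] by blast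
  let ?K = "{i. i < chi \<and> (\<forall>y<i. F y \<le> i)}"
  have "cof chi = chi" using reg unfolding regular_cardinal_def by blast
  then have "club_in ?K chi" using club_in_closure_points[of chi F] unc F_less F_mono by simp
  moreover have "strict_mono_on ?K g"
    unfolding strict_mono_on_def
  proof (intro allI impI, elim conjE)
    fix a b assume a: "a \<in> ?K" and b: "b \<in> ?K" and "a < b"
    show "g a < g b"
    proof (rule ccontr)
      assume "\<not> g a < g b"
      then have "b < F a" using F_bound[of a b] a b by simp
      moreover have "F a \<le> b" using b \<open>a < b\<close> by simp
      ultimately show False by simp
    qed
  qed
  ultimately show thesis using that by blast
qed

lemma strict_mono_on_club_if_inj_on_club:
  fixes chi :: "'a::wellorder"
  assumes reg: "regular_cardinal chi" and unc: "uncountable {..<chi}" and "cof d = chi"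
    and C: "club_in C d" and inj: "inj_on h C" and h: "h ` C \<subseteq> {..<chi}"
  obtains C' where "club_in C' d" and "strict_mono_on C' h"
proof -
  obtain e where N: "normal_on e chi d" and eC: "\<And>j. j < chi \<Longrightarrow> e j \<in> C"
    using normal_on_club_exists[OF \<open>cof d = chi\<close> regular_cardinal_is_limit[OF reg] C] by blast
  have "inj_on (h \<circ> e) {..<chi}"
  proof (rule comp_inj_on)
    show "inj_on e {..<chi}" using normal_onD(1)[OF N] by (rule strict_mono_on_imp_inj_on)
    show "inj_on h (e ` {..<chi})" using inj by (rule inj_on_subset) (use eC in auto)
  qed
  moreover have "(h \<circ> e) ` {..<chi} \<subseteq> {..<chi}" using h eC by auto
  ultimately obtain D where D: "club_in D chi" "strict_mono_on D (h \<circ> e)"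
    using strict_mono_on_club_if_inj[OF reg unc] by blast
  have "strict_mono_on (e ` D) h"
    unfolding strict_mono_on_def
  proof (intro allI impI, elim conjE)
    fix x y assume "x \<in> e ` D" "y \<in> e ` D" "x < y"
    then obtain a b where ab: "a \<in> D" "b \<in> D" "x = e a" "y = e b" by blast
    then have "a < b" using normal_on_less_iff(1)[OF N] club_in_subset[OF D(1)] \<open>x < y\<close> by auto
    then show "h x < h y" using D(2) ab unfolding strict_mono_on_def by auto
  qed
  with normal_on_image_club[OF N D(1)] show thesis by (rule that)
qed

lemma club_strict_mono_iff_club_inj:
  fixes chi :: "'a::wellorder"
  assumes reg: "regular_cardinal chi" and unc: "uncountable {..<chi}" and h: "maps_into h eta chi"
  shows "(\<forall>d\<in>S_cof eta chi. \<exists>C. club_in C d \<and> strict_mono_on C h) \<longleftrightarrow>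
         (\<forall>d\<in>S_cof eta chi. \<exists>C. club_in C d \<and> inj_on h C)"
proof (intro iffI ballI)
  fix d assume "\<forall>d\<in>S_cof eta chi. \<exists>C. club_in C d \<and> strict_mono_on C h" "d \<in> S_cof eta chi"
  then show "\<exists>C. club_in C d \<and> inj_on h C" using strict_mono_on_imp_inj_on by blast
next
  fix d assume "\<forall>d\<in>S_cof eta chi. \<exists>C. club_in C d \<and> inj_on h C" and d: "d \<in> S_cof eta chi"
  then obtain C where C: "club_in C d" "inj_on h C" by blast
  have "C \<subseteq> {..<eta}" using club_in_subset[OF C(1)] d unfolding S_cof_def by auto
  then have "h ` C \<subseteq> {..<chi}" using h unfolding maps_into_def by blast
  then show "\<exists>C. club_in C d \<and> strict_mono_on C h"
    using strict_mono_on_club_if_inj_on_club[OF reg unc _ C] d unfolding S_cof_def by blast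
qed

subsection \<open>Gluing injective colourings\<close>

definition inj_nonrefl :: "'a::wellorder \<Rightarrow> 'a \<Rightarrow> bool" where
  "inj_nonrefl eta chi \<longleftrightarrow>
     (\<exists>h. maps_into h eta chi \<and> (\<forall>d\<in>S_cof eta chi. \<exists>C. club_in C d \<and> inj_on h C))"

lemma strong_nonrefl_iff_inj_nonrefl:
  fixes chi :: "'a::wellorder"
  assumes "regular_cardinal chi" and "uncountable {..<chi}" and "chi < eta"
  shows "strong_nonrefl eta chi \<longleftrightarrow> inj_nonrefl eta chi"
  unfolding strong_nonrefl_def inj_nonrefl_def
  using club_strict_mono_iff_club_inj[OF assms(1,2)] assms(3) by blast

lemma inj_nonrefl_if_cover:
  fixes chi :: "'a::wellorder"
  assumes "infinite {..<chi}" and h1: "maps_into h1 eta chi" and h2: "maps_into h2 eta chi"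
    and cover: "\<forall>d\<in>S_cof eta chi. \<exists>C. club_in C d \<and> (inj_on h1 C \<or> inj_on h2 C)"
  shows "inj_nonrefl eta chi"
proof -
  obtain p where p: "bij_betw p ({..<chi} \<times> {..<chi}) {..<chi}"
    using card_of_Times_same_infinite[OF assms(1)] card_of_ordIso by blast
  let ?h = "\<lambda>x. p (h1 x, h2 x)"
  have pairs: "(h1 x, h2 x) \<in> {..<chi} \<times> {..<chi}" if "x < eta" for x
    using h1 h2 that unfolding maps_into_def by auto
  have "maps_into ?h eta chi"
    unfolding maps_into_def using pairs p by (auto simp: bij_betw_def)
  moreover have "inj_on ?h C" if "C \<subseteq> {..<eta}" and "inj_on h1 C \<or> inj_on h2 C" for C
  proof (rule inj_onI)
    fix x y assume "x \<in> C" "y \<in> C" "?h x = ?h y"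
    moreover have "(h1 x, h2 x) \<in> {..<chi} \<times> {..<chi}" "(h1 y, h2 y) \<in> {..<chi} \<times> {..<chi}"
      using pairs \<open>x \<in> C\<close> \<open>y \<in> C\<close> \<open>C \<subseteq> {..<eta}\<close> by blast+
    ultimately have "(h1 x, h2 x) = (h1 y, h2 y)"
      using p unfolding bij_betw_def inj_on_def by blast
    then show "x = y" using \<open>x \<in> C\<close> \<open>y \<in> C\<close> \<open>inj_on h1 C \<or> inj_on h2 C\<close> by (auto simp: inj_on_def)
  qed
  moreover have "C \<subseteq> {..<eta}" if "club_in C d" "d \<in> S_cof eta chi" for C d
    using club_in_subset[OF that(1)] that(2) unfolding S_cof_def by auto
  ultimately show ?thesis unfolding inj_nonrefl_def using cover by meson
qed

lemma inj_nonrefl_le: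
  fixes chi :: "'a::wellorder"
  assumes "z < chi" and "a \<le> chi"
  shows "inj_nonrefl a chi"
proof -
  have "cof d < chi" if "d < a" for d
    using cof_le_self[of d] that assms(2) by (meson le_less_trans less_le_trans)
  then have "S_cof a chi = {}" unfolding S_cof_def by fastforce
  moreover have "maps_into (\<lambda>_. z) a chi" using assms(1) unfolding maps_into_def by auto
  ultimately show ?thesis unfolding inj_nonrefl_def by blast
qed

text \<open>Colour \<open>x\<close> by a witness for an ordinal beyond the next point of \<open>E\<close> above \<open>x\<close>. If \<open>d\<close> is
  not an accumulation point of \<open>E\<close>, this next point is the same for all \<open>x\<close> in a tail of \<open>d\<close>,
  so a single witness serves the whole tail.\<close>

lemma inj_colouring_off_acc_points:
  fixes chi :: "'a::wellorder"
  assumes "infinite {..<chi}" and lim: "is_limit eta" and E: "club_in E eta"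
    and below: "\<forall>a<eta. inj_nonrefl a chi"
  obtains h where "maps_into h eta chi"
    and "\<And>d. d \<in> S_cof eta chi \<Longrightarrow> \<not> acc_point E d \<Longrightarrow> \<exists>C. club_in C d \<and> inj_on h C"
proof -
  define s where "s e = (SOME e'. e < e' \<and> e' < eta)" for e
  have s: "e < s e" "s e < eta" if "e < eta" for e
    using someI_ex[OF is_limitD[OF lim that]] unfolding s_def by auto
  define W where "W e = (SOME h. maps_into h (s e) chi \<and>
      (\<forall>d\<in>S_cof (s e) chi. \<exists>C. club_in C d \<and> inj_on h C))" for e
  have W: "maps_into (W e) (s e) chi" "\<forall>d\<in>S_cof (s e) chi. \<exists>C. club_in C d \<and> inj_on (W e) C"
    if "e < eta" for e
    using someI_ex[OF below[rule_format, OF s(2)[OF that], unfolded inj_nonrefl_def]]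
    unfolding W_def by auto
  note next_E = next_in[OF E lim]
  define h where "h x = W (next_in E x) x" for x
  have "h x < chi" if x: "x < eta" for x
  proof -
    have "x < s (next_in E x)" using next_E(2)[OF x] s(1)[OF next_E(3)[OF x]] by (rule less_trans)
    then show ?thesis using W(1)[OF next_E(3)[OF x]] unfolding h_def maps_into_def by blast
  qed
  then have "maps_into h eta chi" unfolding maps_into_def by auto
  moreover have "\<exists>C. club_in C d \<and> inj_on h C" if d: "d \<in> S_cof eta chi" and "\<not> acc_point E d" for d
  proof -
    have "d < eta" and "cof d = chi" using d unfolding S_cof_def by auto
    then have "is_limit d" using infinite_cof_imp_is_limit[of d] \<open>infinite {..<chi}\<close> by simp
    then obtain b where "b < d" and gap: "\<forall>x\<in>E. \<not> (b \<le> x \<and> x < d)"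
      using \<open>\<not> acc_point E d\<close> unfolding acc_point_def by blast
    define e0 where "e0 = next_in E b"
    have "b < eta" using \<open>b < d\<close> \<open>d < eta\<close> by (rule less_trans)
    then have "e0 \<in> E" "b < e0" "e0 < eta" using next_E unfolding e0_def by auto
    then have "d \<le> e0" using gap by (meson less_imp_le not_le)
    then have "d < s e0" using s(1)[OF \<open>e0 < eta\<close>] by (rule le_less_trans)
    then have "d \<in> S_cof (s e0) chi" using \<open>cof d = chi\<close> unfolding S_cof_def by simp
    then obtain C where C: "club_in C d" "inj_on (W e0) C" using W(2)[OF \<open>e0 < eta\<close>] by blast
    have "next_in E x = e0" if x: "x \<in> C \<inter> {b..}" for x
    proof -
      have "x < d" "b \<le> x" using x club_in_subset[OF C(1)] by auto
      then have "x < eta" using \<open>d < eta\<close> by (meson less_trans)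
      have "next_in E x \<le> e0"
        using next_in_least[OF \<open>e0 \<in> E\<close>] \<open>x < d\<close> \<open>d \<le> e0\<close> by (meson less_le_trans)
      moreover have "e0 \<le> next_in E x"
        using next_in_least[OF next_E(1)[OF \<open>x < eta\<close>]] next_E(2)[OF \<open>x < eta\<close>] \<open>b \<le> x\<close>
        unfolding e0_def by (meson le_less_trans)
      ultimately show ?thesis by simp
    qed
    then have "inj_on h (C \<inter> {b..})" using C(2) unfolding h_def inj_on_def by auto
    then show ?thesis using club_in_Int_atLeast[OF C(1) \<open>b < d\<close>] by blast
  qed
  ultimately show thesis using that by blast
qed

lemma inj_nonrefl_limit:
  fixes chi :: "'a::wellorder"
  assumes "infinite {..<chi}" and "is_limit eta" and E: "club_in E eta"
    and "\<forall>a<eta. inj_nonrefl a chi" and h: "maps_into h eta chi"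
    and h_acc: "\<forall>d\<in>S_cof eta chi. acc_point E d \<longrightarrow> (\<exists>C. club_in C d \<and> inj_on h C)"
  shows "inj_nonrefl eta chi"
proof -
  obtain h' where "maps_into h' eta chi"
    and "\<And>d. d \<in> S_cof eta chi \<Longrightarrow> \<not> acc_point E d \<Longrightarrow> \<exists>C. club_in C d \<and> inj_on h' C"
    using inj_colouring_off_acc_points[OF assms(1-4)] by blast
  then show ?thesis using inj_nonrefl_if_cover[OF assms(1) h] h_acc by blast
qed

lemma inj_nonrefl_successor:
  fixes chi :: "'a::wellorder"
  assumes reg: "regular_cardinal chi" and "inj_nonrefl b chi" and "b < eta"
    and top: "\<forall>g. b < g \<longrightarrow> \<not> g < eta"
  shows "inj_nonrefl eta chi"
proof -
  have inf: "infinite {..<chi}" and lim: "is_limit chi"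
    using reg regular_cardinal_is_limit unfolding regular_cardinal_def by auto
  then obtain z where "z < chi" unfolding is_limit_def by blast
  obtain h where h: "maps_into h b chi" "\<forall>d\<in>S_cof b chi. \<exists>C. club_in C d \<and> inj_on h C"
    using \<open>inj_nonrefl b chi\<close> unfolding inj_nonrefl_def by blast
  let ?h1 = "\<lambda>x. if x < b then h x else z"
  have h1: "maps_into ?h1 eta chi" using h(1) \<open>z < chi\<close> unfolding maps_into_def by auto
  obtain h2 where h2: "maps_into h2 eta chi" "cof b = chi \<Longrightarrow> \<exists>C. club_in C b \<and> inj_on h2 C"
  proof (cases "cof b = chi")
    case True
    then have "is_limit b" using inf infinite_cof_imp_is_limit[of b] by simp
    then obtain C g where "club_in C b" "inj_on g C" "g ` C \<subseteq> {..<chi}"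
      using club_in_inj_into_cof lim True by metis
    moreover have "inj_on (\<lambda>x. if x \<in> C then g x else z) C"
      using \<open>inj_on g C\<close> by (simp add: inj_on_def)
    moreover have "maps_into (\<lambda>x. if x \<in> C then g x else z) eta chi"
      using \<open>g ` C \<subseteq> {..<chi}\<close> \<open>z < chi\<close> unfolding maps_into_def by auto
    ultimately show thesis using that by blast
  next
    case False
    have "maps_into (\<lambda>_. z) eta chi" using \<open>z < chi\<close> unfolding maps_into_def by auto
    then show thesis using that False by blast
  qed
  have "\<exists>C. club_in C d \<and> (inj_on ?h1 C \<or> inj_on h2 C)" if d: "d \<in> S_cof eta chi" for d
  proof (cases "d = b")
    case True
    then show ?thesis using h2(2) d unfolding S_cof_def by blast
  next
    case False
    moreover have "\<not> b < d" using top d unfolding S_cof_def by blast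
    ultimately have "d < b" by simp
    then obtain C where C: "club_in C d" "inj_on h C" using h(2) d unfolding S_cof_def by auto
    have "C \<subseteq> {..<b}" using club_in_subset[OF C(1)] \<open>d < b\<close> by auto
    then have "inj_on ?h1 C" using C(2) unfolding inj_on_def by auto
    then show ?thesis using C(1) by blast
  qed
  then show ?thesis using inj_nonrefl_if_cover[OF inf h1 h2(1)] by blast
qed

lemma inj_colouring_along_normal:
  fixes chi :: "'a::wellorder"
  assumes "z < chi" and N: "normal_on e k T" and g: "maps_into g k chi"
    and g_inj: "\<forall>d\<in>S_cof k chi. \<exists>C. club_in C d \<and> inj_on g C"
  obtains h where "maps_into h T chi"
    and "\<And>d. d \<in> S_cof T chi \<Longrightarrow> acc_point (e ` {..<k}) d \<Longrightarrow> \<exists>C. club_in C d \<and> inj_on h C"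
proof -
  define h where "h x = (if x \<in> e ` {..<k} then g (inv_into {..<k} e x) else z)" for x
  have "inj_on e {..<k}" using normal_onD(1)[OF N] by (rule strict_mono_on_imp_inj_on)
  then have h_e: "h (e j) = g j" if "j < k" for j using that by (auto simp: h_def)
  have "h x < chi" for x
  proof (cases "x \<in> e ` {..<k}")
    case True
    then obtain j where "j < k" "x = e j" by blast
    then show ?thesis using h_e g unfolding maps_into_def by auto
  qed (use \<open>z < chi\<close> in \<open>simp add: h_def\<close>)
  then have "maps_into h T chi" unfolding maps_into_def by auto
  moreover have "\<exists>C. club_in C d \<and> inj_on h C"
    if d: "d \<in> S_cof T chi" and acc: "acc_point (e ` {..<k}) d" for d
  proof -
    have "d < T" and "cof d = chi" using d unfolding S_cof_def by auto
    then obtain J where J: "J < k" "e J = d" "acc_point {..<k} J"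
      using normal_on_acc_point[OF N subset_refl \<open>d < T\<close> acc] by blast
    have "is_limit J" using J(3) unfolding acc_point_def by blast
    then have "J \<in> S_cof k chi"
      using cof_normal_on[OF N J(1)] J(1,2) \<open>cof d = chi\<close> unfolding S_cof_def by simp
    then obtain C where C: "club_in C J" "inj_on g C" using g_inj by blast
    have "club_in (e ` C) d"
      using normal_on_image_club[OF normal_on_restrict[OF N J(1) \<open>is_limit J\<close>] C(1)] J(2) by simp
    moreover have "C \<subseteq> {..<k}" using club_in_subset[OF C(1)] J(1) by auto
    have "inj_on h (e ` C)"
    proof (rule inj_onI)
      fix x y assume "x \<in> e ` C" "y \<in> e ` C" "h x = h y"
      then obtain a b where ab: "a \<in> C" "b \<in> C" "x = e a" "y = e b" by blast
      moreover have "a < k" "b < k" using ab(1,2) \<open>C \<subseteq> {..<k}\<close> by auto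
      ultimately have "g a = g b" using h_e \<open>h x = h y\<close> by metis
      then have "a = b" using inj_onD[OF C(2)] ab(1,2) by blast
      then show "x = y" using ab by simp
    qed
    ultimately show ?thesis by blast
  qed
  ultimately show thesis using that by blast
qed

lemma inj_nonrefl_singular_limit:
  fixes chi :: "'a::wellorder"
  assumes "infinite {..<chi}" and lim: "is_limit T" and "cof T < T"
    and below: "\<forall>a<T. inj_nonrefl a chi"
  shows "inj_nonrefl T chi"
proof -
  obtain z where "z < chi" using infinite_imp_nonempty[OF assms(1)] by auto
  obtain e where N: "normal_on e (cof T) T"
    using normal_on_club_exists[OF refl is_limit_cof[OF lim] club_in_lessThan[OF lim]] by blast
  obtain g where "maps_into g (cof T) chi" "\<forall>d\<in>S_cof (cof T) chi. \<exists>C. club_in C d \<and> inj_on g C"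
    using below \<open>cof T < T\<close> unfolding inj_nonrefl_def by blast
  then obtain h where "maps_into h T chi"
    and "\<And>d. d \<in> S_cof T chi \<Longrightarrow> acc_point (e ` {..<cof T}) d \<Longrightarrow> \<exists>C. club_in C d \<and> inj_on h C"
    using inj_colouring_along_normal[OF \<open>z < chi\<close> N] by blast
  moreover have "club_in (e ` {..<cof T}) T"
    using normal_on_image_club[OF N club_in_lessThan[OF is_limit_cof[OF lim]]] .
  ultimately show ?thesis using inj_nonrefl_limit[OF assms(1) lim _ below] by blast
qed

lemma refl_set_normal_on_image:
  fixes chi :: "'a::wellorder"
  assumes unc: "uncountable {..<chi}" and N: "normal_on e k gam" and "gam \<le> eta"
    and i: "i \<in> refl_set (h \<circ> e) k chi"
  shows "e i \<in> refl_set h eta chi"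
proof -
  have "i < k" and "cof i = chi" and no_club: "\<nexists>C. club_in C i \<and> strict_mono_on C (h \<circ> e)"
    using i unfolding refl_set_def S_cof_def by auto
  then have "is_limit i" using infinite_cof_imp_is_limit unc countable_finite by auto
  have "cof (e i) = chi" using cof_normal_on[OF N \<open>i < k\<close> \<open>is_limit i\<close>] \<open>cof i = chi\<close> by simp
  moreover have "e i < eta" using normal_onD(2)[OF N \<open>i < k\<close>] \<open>gam \<le> eta\<close> by simp
  moreover have "\<nexists>C. club_in C (e i) \<and> strict_mono_on C h"
  proof
    assume "\<exists>C. club_in C (e i) \<and> strict_mono_on C h"
    then obtain C where C: "club_in C (e i)" "strict_mono_on C h" by blast
    have "normal_on e i (e i)" using normal_on_restrict[OF N \<open>i < k\<close> \<open>is_limit i\<close>] .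
    then have "club_in {j. j < i \<and> e j \<in> C} i"
      using normal_on_preimage_club[OF _ _ \<open>is_limit i\<close> C(1)] unc \<open>cof (e i) = chi\<close> by simp
    moreover have "strict_mono_on {j. j < i \<and> e j \<in> C} (h \<circ> e)"
      unfolding strict_mono_on_def
    proof (intro allI impI, elim conjE)
      fix a b assume "a \<in> {j. j < i \<and> e j \<in> C}" "b \<in> {j. j < i \<and> e j \<in> C}" "a < b"
      moreover from this have "a < k" "b < k" using \<open>i < k\<close> by auto
      ultimately have "e a \<in> C" "e b \<in> C" "e a < e b" using normal_on_less_iff(1)[OF N] by auto
      then show "(h \<circ> e) a < (h \<circ> e) b" using C(2) unfolding strict_mono_on_def by simp
    qed
    ultimately show False using no_club by blast
  qed
  ultimately show ?thesis unfolding refl_set_def S_cof_def by blast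
qed

subsection \<open>The least weakly reflective ordinal\<close>

lemma weakly_reflective_mono:
  assumes wr: "weakly_reflective eta chi" and "eta \<le> zeta"
  shows "weakly_reflective zeta chi"
  unfolding weakly_reflective_def
proof
  have "chi < eta" using wr unfolding weakly_reflective_def by blast
  then show "chi < zeta" using \<open>eta \<le> zeta\<close> by (rule less_le_trans)
  have sub: "{..<eta} \<subseteq> {..<zeta}" using \<open>eta \<le> zeta\<close> by simp
  show "\<not> strong_nonrefl zeta chi"
  proof
    assume "strong_nonrefl zeta chi"
    then obtain h where h: "maps_into h zeta chi"
      "\<forall>d\<in>S_cof zeta chi. \<exists>C. club_in C d \<and> strict_mono_on C h"
      unfolding strong_nonrefl_def by blast
    have "maps_into h eta chi"
      using image_mono[OF sub, of h] h(1) unfolding maps_into_def by (rule subset_trans)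
    moreover have "S_cof eta chi \<subseteq> S_cof zeta chi" using sub unfolding S_cof_def by auto
    then have "\<forall>d\<in>S_cof eta chi. \<exists>C. club_in C d \<and> strict_mono_on C h" using h(2) by blast
    ultimately have "strong_nonrefl eta chi"
      using \<open>chi < eta\<close> unfolding strong_nonrefl_def by blast
    then show False using wr unfolding weakly_reflective_def by blast
  qed
qed

lemma weakly_reflective_theta_star:
  assumes "weakly_reflective eta chi"
  shows "weakly_reflective (theta_star chi) chi" and "theta_star chi \<le> eta"
  unfolding theta_star_def using assms by (rule LeastI, rule Least_le)

context
  fixes chi :: "'a::wellorder"
  assumes reg: "regular_cardinal chi" and unc: "uncountable {..<chi}"
begin

lemma inj_nonrefl_below_theta_star:
  assumes "weakly_reflective eta chi" and "a < theta_star chi"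
  shows "inj_nonrefl a chi"
proof (cases "a \<le> chi")
  case True
  obtain z where "z < chi" using regular_cardinal_is_limit[OF reg] unfolding is_limit_def by blast
  then show ?thesis using inj_nonrefl_le True by blast
next
  case False
  have "\<not> weakly_reflective a chi" using assms(2) unfolding theta_star_def by (rule not_less_Least)
  then show ?thesis
    using strong_nonrefl_iff_inj_nonrefl[OF reg unc] False unfolding weakly_reflective_def by auto
qed

lemma not_inj_nonrefl_theta_star:
  assumes "weakly_reflective eta chi"
  shows "\<not> inj_nonrefl (theta_star chi) chi"
  using weakly_reflective_theta_star(1)[OF assms] strong_nonrefl_iff_inj_nonrefl[OF reg unc]
  unfolding weakly_reflective_def by blast

lemma regular_cardinal_theta_star:
  assumes "weakly_reflective eta chi"
  shows "regular_cardinal (theta_star chi)"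
proof (rule ccontr)
  let ?T = "theta_star chi"
  assume not_regular: "\<not> regular_cardinal ?T"
  have "chi < ?T" using weakly_reflective_theta_star(1)[OF assms] unfolding weakly_reflective_def ..
  have below: "\<forall>a<?T. inj_nonrefl a chi" using inj_nonrefl_below_theta_star[OF assms] by blast
  have "inj_nonrefl ?T chi"
  proof (cases "is_limit ?T")
    case False
    then obtain b where "b < ?T" "\<forall>g. b < g \<longrightarrow> \<not> g < ?T"
      using \<open>chi < ?T\<close> unfolding is_limit_def by blast
    then show ?thesis using inj_nonrefl_successor[OF reg] below by blast
  next
    case True
    have inf: "infinite {..<chi}" using reg unfolding regular_cardinal_def by blast
    moreover have "{..<chi} \<subseteq> {..<?T}" using \<open>chi < ?T\<close> by auto
    ultimately have "infinite {..<?T}" using finite_subset by blast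
    then have "cof ?T \<noteq> ?T"
      using not_regular cof_eq_self_imp_is_cardinal unfolding regular_cardinal_def by blast
    then have "cof ?T < ?T" using cof_le_self[of ?T] by simp
    then show ?thesis using inj_nonrefl_singular_limit[OF inf True _ below] by blast
  qed
  then show False using not_inj_nonrefl_theta_star[OF assms] by blast
qed

lemma weakly_reflective_iff_regular_below:
  "weakly_reflective zeta chi \<longleftrightarrow>
     (\<exists>theta. regular_cardinal theta \<and> theta \<le> zeta \<and> weakly_reflective theta chi)"
  using regular_cardinal_theta_star weakly_reflective_theta_star weakly_reflective_mono by blast

lemma stationary_refl_set_theta_star:
  assumes "weakly_reflective eta chi" and h: "maps_into h (theta_star chi) chi"
  shows "stationary_in (refl_set h (theta_star chi) chi) (theta_star chi)"
  unfolding stationary_in_def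
proof (intro conjI allI impI)
  let ?T = "theta_star chi"
  show "refl_set h ?T chi \<subseteq> {..<?T}" unfolding refl_set_def S_cof_def by auto
  fix E assume E: "club_in E ?T"
  show "refl_set h ?T chi \<inter> E \<noteq> {}"
  proof
    assume disjoint: "refl_set h ?T chi \<inter> E = {}"
    have "\<exists>C. club_in C d \<and> inj_on h C" if d: "d \<in> S_cof ?T chi" and "acc_point E d" for d
    proof -
      have "d \<in> E" using club_in_closed[OF E _ \<open>acc_point E d\<close>] d unfolding S_cof_def by blast
      then obtain C where "club_in C d" "strict_mono_on C h"
        using disjoint d unfolding refl_set_def by blast
      then show ?thesis using strict_mono_on_imp_inj_on by blast
    qed
    moreover have "infinite {..<chi}" using reg unfolding regular_cardinal_def by blast
    moreover have "\<forall>a<?T. inj_nonrefl a chi"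
      using inj_nonrefl_below_theta_star[OF assms(1)] by blast
    moreover have "is_limit ?T"
      using regular_cardinal_is_limit[OF regular_cardinal_theta_star[OF assms(1)]] .
    ultimately have "inj_nonrefl ?T chi" using inj_nonrefl_limit[OF _ _ E _ h] by blast
    then show False using not_inj_nonrefl_theta_star[OF assms(1)] by blast
  qed
qed

lemma stationary_refl_set:
  assumes "weakly_reflective eta' chi" and "theta_star chi \<le> cof eta"
    and stat: "stationary_in (S_cof eta (theta_star chi)) eta" and h: "maps_into h eta chi"
  shows "stationary_in (refl_set h eta chi) eta"
  unfolding stationary_in_def
proof (intro conjI allI impI)
  let ?T = "theta_star chi"
  show "refl_set h eta chi \<subseteq> {..<eta}" unfolding refl_set_def S_cof_def by auto
  fix E assume E: "club_in E eta"
  have "chi < ?T"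
    using weakly_reflective_theta_star(1)[OF assms(1)] unfolding weakly_reflective_def ..
  then have "{..<chi} \<subseteq> {..<cof eta}" using assms(2) by simp
  then have "uncountable {..<cof eta}" using unc countable_subset by blast
  then obtain gam where gam: "gam \<in> S_cof eta ?T" "gam < eta" "acc_point E gam"
    using stat club_in_acc_points[OF _ E] unfolding stationary_in_def by blast
  have regT: "regular_cardinal ?T" using regular_cardinal_theta_star[OF assms(1)] .
  obtain e where N: "normal_on e ?T gam" and eE: "\<And>j. j < ?T \<Longrightarrow> e j \<in> E \<inter> {..<gam}"
    using normal_on_club_exists[OF _ regular_cardinal_is_limit[OF regT]
        club_in_below_acc_point[OF E gam(2,3)]] gam(1) unfolding S_cof_def by blast
  have "e ` {..<?T} \<subseteq> {..<eta}" using eE gam(2) by force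
  have "(h \<circ> e) ` {..<?T} = h ` e ` {..<?T}" by (rule image_comp[symmetric])
  also have "\<dots> \<subseteq> h ` {..<eta}" using \<open>e ` {..<?T} \<subseteq> {..<eta}\<close> by (rule image_mono)
  also have "\<dots> \<subseteq> {..<chi}" using h unfolding maps_into_def .
  finally have "maps_into (h \<circ> e) ?T chi" unfolding maps_into_def .
  then obtain i where "i \<in> refl_set (h \<circ> e) ?T chi"
    using stationary_refl_set_theta_star[OF assms(1)]
      club_in_lessThan[OF regular_cardinal_is_limit[OF regT]]
    unfolding stationary_in_def by blast
  then have "e i \<in> refl_set h eta chi" and "i < ?T"
    using refl_set_normal_on_image[OF unc N less_imp_le[OF gam(2)]] unfolding refl_set_def S_cof_def
    by blast+
  then show "refl_set h eta chi \<inter> E \<noteq> {}" using eE by blast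
qed

end

theorem mainTheorem2:
  fixes chi :: "'a::wellorder"
  assumes "regular_cardinal chi" and "uncountable {..<chi}"
  shows
   "(\<forall>eta zeta. weakly_reflective eta chi \<and> eta < zeta \<longrightarrow> weakly_reflective zeta chi)
    \<and> (\<forall>eta. chi < eta \<longrightarrow>
         (strong_nonrefl eta chi \<longleftrightarrow>
            (\<exists>h. maps_into h eta chi \<and>
               (\<forall>d\<in>S_cof eta chi. \<exists>C. club_in C d \<and> inj_on h C)))
         \<and> (\<forall>h. maps_into h eta chi \<longrightarrow>
              ((\<forall>d\<in>S_cof eta chi. \<exists>C. club_in C d \<and> strict_mono_on C h) \<longleftrightarrow>
               (\<forall>d\<in>S_cof eta chi. \<exists>C. club_in C d \<and> inj_on h C))))
    \<and> ((\<exists>eta. weakly_reflective eta chi) \<longrightarrow>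
         regular_cardinal (theta_star chi) \<and> chi < theta_star chi)
    \<and> (\<forall>zeta. weakly_reflective zeta chi \<longleftrightarrow>
         (\<exists>theta. regular_cardinal theta \<and> theta \<le> zeta \<and> weakly_reflective theta chi))
    \<and> ((\<exists>eta. weakly_reflective eta chi) \<longrightarrow>
         (\<forall>eta. (eta = theta_star chi \<or>
                 (theta_star chi \<le> cof eta \<and>
                  stationary_in (S_cof eta (theta_star chi)) eta)) \<longrightarrow>
            (\<forall>h. maps_into h eta chi \<longrightarrow> stationary_in (refl_set h eta chi) eta)))"
proof -
  note reg = assms(1) and unc = assms(2)
  have theta_star: "regular_cardinal (theta_star chi) \<and> chi < theta_star chi"
    if "weakly_reflective eta chi" for eta
    using regular_cardinal_theta_star[OF reg unc that] weakly_reflective_theta_star(1)[OF that]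
    unfolding weakly_reflective_def by blast
  show ?thesis
    unfolding inj_nonrefl_def[symmetric]
  proof (intro conjI allI impI)
    show "weakly_reflective zeta chi" if "weakly_reflective eta chi \<and> eta < zeta" for eta zeta
      using that weakly_reflective_mono less_imp_le by blast
  qed (use strong_nonrefl_iff_inj_nonrefl[OF reg unc] club_strict_mono_iff_club_inj[OF reg unc]
      theta_star weakly_reflective_iff_regular_below[OF reg unc]
      stationary_refl_set_theta_star[OF reg unc] stationary_refl_set[OF reg unc] in blast)+
qed

end
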